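(* Let $(X,d)$ be a compact metric space and let $f:X\to X$ be a homeomorphism. If $f$ possesses a wandering point, then ${\rm h_{pol}}(f)\ge1$.
   Context: A point $x$ is wandering for $f$ if there is a neighborhood $U$ of $x$ with $f^k(U)\cap U=\emptyset$ for all $k\ge1$. Polynomial entropy: with $d_n^f(x,y)=\max_{0\le k\le n-1}d(f^k(x),f^k(y))$ and $G_n^f(\varepsilon)$ the minimal number of $d_n^f$-balls of radius $\varepsilon$ covering $X$, ${\rm h_{pol}}(f)=\lim_{\varepsilon\to0}\limsup_{n\to\infty}\frac{\log G_n^f(\varepsilon)}{\log n}$. *)

theory Defs
  imports "HOL-Analysis.Analysis"
begin

definition bowen_dist :: "('a::metric_space \<Rightarrow> 'a) \<Rightarrow> nat \<Rightarrow> 'a \<Rightarrow> 'a \<Rightarrow> real" where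
  "bowen_dist f n x y = Max ((\<lambda>k. dist ((f ^^ k) x) ((f ^^ k) y)) ` {..<n})"

definition cover_num :: "'a::metric_space set \<Rightarrow> ('a \<Rightarrow> 'a) \<Rightarrow> nat \<Rightarrow> real \<Rightarrow> nat" where
  "cover_num X f n e = Inf {card C | C. finite C \<and> C \<subseteq> X \<and>
      X \<subseteq> (\<Union>c\<in>C. {y. bowen_dist f n c y < e})}"

definition hpol :: "'a::metric_space set \<Rightarrow> ('a \<Rightarrow> 'a) \<Rightarrow> ereal" where
  "hpol X f = Lim (at_right (0::real))
     (\<lambda>e. limsup (\<lambda>n. ereal (ln (real (cover_num X f n e)) / ln (real n))))"

definition wandering_point :: "'a::metric_space set \<Rightarrow> ('a \<Rightarrow> 'a) \<Rightarrow> 'a \<Rightarrow> bool" where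
  "wandering_point X f x \<longleftrightarrow> x \<in> X \<and> (\<exists>U. U \<subseteq> X \<and>
      (\<exists>V. openin (top_of_set X) V \<and> x \<in> V \<and> V \<subseteq> U) \<and>
      (\<forall>k\<ge>1. (f ^^ k) ` U \<inter> U = {}))"

end

theory Submission
  imports Defs
begin

text \<open>
  Let g be the inverse of f and let the ball B(x, r) lie in a wandering neighbourhood
  of x. For i < j < n, the iterate f^j maps g^i x and g^j x to f^(j-i) x and x, and
  f^(j-i) x lies outside B(x, r). So the first n backward iterates of x are
  r-separated for the Bowen distance d_n, and no d_n-ball of radius r/2 contains two
  of them. Hence G_n(eps) >= n for eps <= r/2, i.e. log G_n(eps) / log n >= 1; as these
  quotients grow when eps shrinks, the limit eps -> 0 exists and is at least 1.
\<close>

lemma funpow_image_subset: "f ` X \<subseteq> X \<Longrightarrow> (f ^^ k) ` X \<subseteq> X"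
  by (induction k) auto

lemma continuous_on_funpow:
  assumes "continuous_on X f" "f ` X \<subseteq> X"
  shows "continuous_on X (f ^^ k)"
proof (induction k)
  case (Suc k)
  then show ?case
    using continuous_on_compose2[OF assms(1) Suc funpow_image_subset[OF assms(2)]] by simp
qed (simp add: continuous_on_id)

lemma funpow_right_inverse_on:
  assumes "\<forall>y\<in>X. g y \<in> X \<and> f (g y) = y" "x \<in> X"
  shows "(g ^^ i) x \<in> X" "(f ^^ i) ((g ^^ i) x) = x"
proof -
  have "(g ^^ i) x \<in> X \<and> (f ^^ i) ((g ^^ i) x) = x"
  proof (induction i)
    case (Suc i)
    have "(f ^^ Suc i) ((g ^^ Suc i) x) = (f ^^ i) (f (g ((g ^^ i) x)))"
      by (simp add: funpow_swap1)
    with Suc assms(1) show ?case by simp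
  qed (simp add: assms(2))
  then show "(g ^^ i) x \<in> X" "(f ^^ i) ((g ^^ i) x) = x" by auto
qed

lemma bowen_dist_Suc:
  "n \<ge> 1 \<Longrightarrow> bowen_dist f (Suc n) a b = max (dist ((f ^^ n) a) ((f ^^ n) b)) (bowen_dist f n a b)"
  unfolding bowen_dist_def lessThan_Suc by (simp add: Max_insert lessThan_empty_iff)

lemma dist_funpow_le_bowen_dist:
  "k < n \<Longrightarrow> dist ((f ^^ k) a) ((f ^^ k) b) \<le> bowen_dist f n a b"
  unfolding bowen_dist_def by (intro Max_ge) auto

lemma bowen_dist_self: "n \<ge> 1 \<Longrightarrow> bowen_dist f n a a = 0"
  unfolding bowen_dist_def by (simp add: image_constant_conv lessThan_empty_iff)

lemma bowen_dist_commute: "bowen_dist f n a b = bowen_dist f n b a"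
  unfolding bowen_dist_def by (simp add: dist_commute)

lemma bowen_dist_triangle:
  assumes "n \<ge> 1"
  shows "bowen_dist f n a b \<le> bowen_dist f n a c + bowen_dist f n c b"
proof -
  have "bowen_dist f n a b \<in> (\<lambda>k. dist ((f ^^ k) a) ((f ^^ k) b)) ` {..<n}"
    unfolding bowen_dist_def using assms by (intro Max_in) (auto simp: lessThan_empty_iff)
  then obtain k where k: "k < n" "bowen_dist f n a b = dist ((f ^^ k) a) ((f ^^ k) b)"
    by auto
  have "dist ((f ^^ k) a) ((f ^^ k) b) \<le> dist ((f ^^ k) a) ((f ^^ k) c) + dist ((f ^^ k) c) ((f ^^ k) b)"
    by (rule dist_triangle)
  also have "\<dots> \<le> bowen_dist f n a c + bowen_dist f n c b"
    using dist_funpow_le_bowen_dist[OF k(1)] by (intro add_mono)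
  finally show ?thesis
    using k by simp
qed

lemma continuous_on_bowen_dist:
  assumes "continuous_on X f" "f ` X \<subseteq> X" "n \<ge> 1"
  shows "continuous_on X (bowen_dist f n c)"
  using assms(3)
proof (induction n rule: dec_induct)
  case base
  have "bowen_dist f 1 c = dist c"
    by (simp add: bowen_dist_def lessThan_Suc fun_eq_iff)
  then show ?case
    by (simp add: continuous_on_dist continuous_on_id)
next
  case (step m)
  then show ?case
    using continuous_on_funpow[OF assms(1,2)]
    by (auto simp: bowen_dist_Suc fun_eq_iff[symmetric]
        intro!: continuous_on_max continuous_on_dist)
qed

definition bowen_cover :: "'a::metric_space set \<Rightarrow> ('a \<Rightarrow> 'a) \<Rightarrow> nat \<Rightarrow> real \<Rightarrow> 'a set \<Rightarrow> bool" where
  "bowen_cover X f n e C \<longleftrightarrow> finite C \<and> C \<subseteq> X \<and> X \<subseteq> (\<Union>c\<in>C. {y. bowen_dist f n c y < e})"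

lemma cover_num_eq_Inf: "cover_num X f n e = Inf (card ` Collect (bowen_cover X f n e))"
  unfolding cover_num_def bowen_cover_def by (rule arg_cong[where f = Inf]) auto

lemma bowen_cover_exists:
  assumes "compact X" "continuous_on X f" "f ` X \<subseteq> X" "n \<ge> 1" "0 < e"
  shows "\<exists>C. bowen_cover X f n e C"
proof -
  define B where "B c = X \<inter> bowen_dist f n c -` {..<e}" for c
  have "\<forall>T\<in>B ` X. openin (top_of_set X) T"
    unfolding B_def using continuous_on_bowen_dist[OF assms(2-4)]
    by (auto intro: continuous_openin_preimage_gen)
  moreover have "X \<subseteq> \<Union>(B ` X)"
    using assms(4,5) by (auto simp: B_def bowen_dist_self)
  ultimately obtain D where D: "D \<subseteq> B ` X" "finite D" "X \<subseteq> \<Union>D"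
    using assms(1) unfolding compact_eq_openin_cover by meson
  then obtain C where "C \<subseteq> X" "finite C" "D = B ` C"
    by (meson finite_subset_image)
  with D show ?thesis
    unfolding bowen_cover_def B_def by (intro exI[of _ C]) auto
qed

lemma bowen_cover_mono:
  assumes "bowen_cover X f n e C" "e \<le> e'"
  shows "bowen_cover X f n e' C"
proof -
  have "(\<Union>c\<in>C. {y. bowen_dist f n c y < e}) \<subseteq> (\<Union>c\<in>C. {y. bowen_dist f n c y < e'})"
    using assms(2) by auto
  with assms(1) show ?thesis
    unfolding bowen_cover_def by blast
qed

lemma cover_num_antimono:
  assumes "compact X" "continuous_on X f" "f ` X \<subseteq> X" "n \<ge> 1" "0 < e" "e \<le> e'"
  shows "cover_num X f n e' \<le> cover_num X f n e"
  unfolding cover_num_eq_Inf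
proof (rule cInf_superset_mono)
  show "card ` Collect (bowen_cover X f n e) \<noteq> {}"
    using bowen_cover_exists[OF assms(1-5)] by blast
  show "card ` Collect (bowen_cover X f n e) \<subseteq> card ` Collect (bowen_cover X f n e')"
    using bowen_cover_mono[OF _ assms(6)] by blast
qed simp

text \<open>Two points at Bowen distance at least \<open>2e\<close> cannot share a ball of radius \<open>e\<close>.\<close>

lemma card_separated_le_bowen_cover:
  assumes "n \<ge> 1" "S \<subseteq> X" "bowen_cover X f n e C"
    and sep: "\<forall>a\<in>S. \<forall>b\<in>S. a \<noteq> b \<longrightarrow> 2 * e \<le> bowen_dist f n a b"
  shows "card S \<le> card C"
proof -
  have "\<forall>a\<in>S. \<exists>c\<in>C. bowen_dist f n c a < e"
    using assms(2,3) unfolding bowen_cover_def by blast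
  then obtain c where c: "\<And>a. a \<in> S \<Longrightarrow> c a \<in> C \<and> bowen_dist f n (c a) a < e"
    by metis
  have "inj_on c S"
  proof (rule inj_onI, rule ccontr)
    fix a b assume ab: "a \<in> S" "b \<in> S" "c a = c b" "a \<noteq> b"
    have "bowen_dist f n a b \<le> bowen_dist f n a (c a) + bowen_dist f n (c a) b"
      by (rule bowen_dist_triangle[OF assms(1)])
    also have "\<dots> < 2 * e"
      using c[OF ab(1)] c[OF ab(2)] ab(3) by (simp add: bowen_dist_commute)
    finally show False
      using sep ab by fastforce
  qed
  then show ?thesis
    using c assms(3) unfolding bowen_cover_def by (intro card_inj_on_le) auto
qed

lemma card_separated_le_cover_num:
  assumes "compact X" "continuous_on X f" "f ` X \<subseteq> X" "n \<ge> 1" "0 < e" "S \<subseteq> X"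
    and "\<forall>a\<in>S. \<forall>b\<in>S. a \<noteq> b \<longrightarrow> 2 * e \<le> bowen_dist f n a b"
  shows "card S \<le> cover_num X f n e"
  unfolding cover_num_eq_Inf
  using bowen_cover_exists[OF assms(1-5)] card_separated_le_bowen_cover[OF assms(4,6) _ assms(7)]
  by (intro cInf_greatest) auto

lemma tendsto_at_right_0_SUP_antimono:
  fixes L :: "real \<Rightarrow> 'b::{complete_linorder, linorder_topology}"
  assumes "\<And>e e'. 0 < e \<Longrightarrow> e \<le> e' \<Longrightarrow> L e' \<le> L e"
  shows "(L \<longlongrightarrow> (SUP e\<in>{0<..}. L e)) (at_right 0)"
proof (rule order_tendstoI)
  fix a assume "a < (SUP e\<in>{0<..}. L e)"
  then obtain e0 where "e0 > 0" "a < L e0"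
    by (auto simp: less_SUP_iff)
  have "a < L e" if "0 < e" "e < e0" for e
    using \<open>a < L e0\<close> assms[OF that(1)] that(2) by (simp add: less_le_trans)
  with \<open>e0 > 0\<close> show "\<forall>\<^sub>F e in at_right 0. a < L e"
    unfolding eventually_at_right_field by blast
next
  fix a assume "(SUP e\<in>{0<..}. L e) < a"
  have "L e < a" if "0 < e" for e
  proof -
    have "L e \<le> (SUP e\<in>{0<..}. L e)"
      using that by (intro SUP_upper) simp
    then show ?thesis
      using \<open>(SUP e\<in>{0<..}. L e) < a\<close> by (rule le_less_trans)
  qed
  then show "\<forall>\<^sub>F e in at_right 0. L e < a"
    unfolding eventually_at_right_field using zero_less_one by blast
qed

lemma ln_of_nat_mono: "m \<le> n \<Longrightarrow> ln (real m) \<le> ln (real n)"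
  by (cases m; cases n) auto

lemma backward_orbit_separated:
  assumes "\<forall>y\<in>X. g y \<in> X \<and> f (g y) = y" "x \<in> X"
    and "\<forall>k\<ge>1. (f ^^ k) x \<notin> ball x r"
    and "i < j" "j < n"
  shows "r \<le> bowen_dist f n ((g ^^ i) x) ((g ^^ j) x)"
proof -
  have "f ^^ j = f ^^ (j - i) \<circ> f ^^ i"
    using \<open>i < j\<close> by (simp flip: funpow_add)
  then have "(f ^^ j) ((g ^^ i) x) = (f ^^ (j - i)) x"
    using funpow_right_inverse_on(2)[OF assms(1,2)] by simp
  then have "dist ((f ^^ j) ((g ^^ i) x)) ((f ^^ j) ((g ^^ j) x)) = dist ((f ^^ (j - i)) x) x"
    using funpow_right_inverse_on(2)[OF assms(1,2)] by simp
  also have "r \<le> \<dots>"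
    using assms(3) \<open>i < j\<close> by (auto simp: dist_commute not_less)
  finally show ?thesis
    using dist_funpow_le_bowen_dist[OF \<open>j < n\<close>, of f] by (rule order.trans)
qed

lemma n_le_cover_num_escaping_point:
  assumes "compact X" and hom: "homeomorphism X X f g" and "x \<in> X"
    and out: "\<forall>k\<ge>1. (f ^^ k) x \<notin> ball x r"
    and "n \<ge> 1" "0 < e" "2 * e \<le> r"
  shows "n \<le> cover_num X f n e"
proof -
  have fX: "f ` X \<subseteq> X" and inv: "\<forall>y\<in>X. g y \<in> X \<and> f (g y) = y"
    using hom unfolding homeomorphism_def by auto
  define S where "S = (\<lambda>j. (g ^^ j) x) ` {..<n}"
  have sep: "r \<le> bowen_dist f n ((g ^^ i) x) ((g ^^ j) x)" if "i < n" "j < n" "i \<noteq> j" for i j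
    using backward_orbit_separated[OF inv \<open>x \<in> X\<close> out, of i j n]
      backward_orbit_separated[OF inv \<open>x \<in> X\<close> out, of j i n] that
    by (cases "i < j") (auto simp: bowen_dist_commute)
  have "inj_on (\<lambda>j. (g ^^ j) x) {..<n}"
  proof (rule inj_onI, rule ccontr)
    fix i j assume "i \<in> {..<n}" "j \<in> {..<n}" "(g ^^ i) x = (g ^^ j) x" "i \<noteq> j"
    then have "r \<le> bowen_dist f n ((g ^^ j) x) ((g ^^ j) x)"
      using sep[of i j] by simp
    also have "\<dots> = 0"
      using bowen_dist_self[OF \<open>n \<ge> 1\<close>] .
    finally show False
      using \<open>0 < e\<close> \<open>2 * e \<le> r\<close> by linarith
  qed
  then have "card S = n"
    by (simp add: S_def card_image)
  moreover have "card S \<le> cover_num X f n e"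
  proof (rule card_separated_le_cover_num[OF \<open>compact X\<close> _ fX \<open>n \<ge> 1\<close> \<open>0 < e\<close>])
    show "continuous_on X f"
      using hom by (rule homeomorphism_cont1)
    show "S \<subseteq> X"
      using funpow_right_inverse_on(1)[OF inv \<open>x \<in> X\<close>] by (auto simp: S_def)
    show "\<forall>a\<in>S. \<forall>b\<in>S. a \<noteq> b \<longrightarrow> 2 * e \<le> bowen_dist f n a b"
    proof (clarsimp simp: S_def)
      fix i j assume "i < n" "j < n" "(g ^^ i) x \<noteq> (g ^^ j) x"
      then show "2 * e \<le> bowen_dist f n ((g ^^ i) x) ((g ^^ j) x)"
        using sep[of i j] \<open>2 * e \<le> r\<close> by fastforce
    qed
  qed
  ultimately show ?thesis by simp
qed

lemma wandering_point_escapes_ball: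
  assumes "wandering_point X f x" "f ` X \<subseteq> X"
  obtains r where "r > 0" "\<forall>k\<ge>1. (f ^^ k) x \<notin> ball x r"
proof -
  obtain U V where UV: "x \<in> X" "U \<subseteq> X" "openin (top_of_set X) V" "x \<in> V" "V \<subseteq> U"
    and disj: "\<forall>k\<ge>1. (f ^^ k) ` U \<inter> U = {}"
    using assms(1) unfolding wandering_point_def by blast
  obtain r where "r > 0" "ball x r \<inter> X \<subseteq> V"
    using UV(3,4) unfolding openin_contains_ball by blast
  moreover have "(f ^^ k) x \<in> X" for k
    using funpow_image_subset[OF assms(2)] UV(1) by blast
  ultimately show ?thesis
  proof (intro that allI impI)
    fix k :: nat assume "k \<ge> 1"
    then have "(f ^^ k) x \<notin> U"
      using disj UV(4,5) by blast
    then show "(f ^^ k) x \<notin> ball x r"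
      using \<open>ball x r \<inter> X \<subseteq> V\<close> \<open>(f ^^ k) x \<in> X\<close> UV(5) by blast
  qed
qed

lemma limsup_log_cover_num_antimono:
  assumes "compact X" "continuous_on X f" "f ` X \<subseteq> X" "0 < e" "e \<le> e'"
  shows "limsup (\<lambda>n. ereal (ln (real (cover_num X f n e')) / ln (real n)))
    \<le> limsup (\<lambda>n. ereal (ln (real (cover_num X f n e)) / ln (real n)))"
proof (intro Limsup_mono eventually_sequentiallyI[of 1])
  fix n :: nat assume "n \<ge> 1"
  then have "ln (real (cover_num X f n e')) \<le> ln (real (cover_num X f n e))"
    using cover_num_antimono[OF assms(1-3) _ assms(4,5)] by (intro ln_of_nat_mono)
  with \<open>n \<ge> 1\<close> show "ereal (ln (real (cover_num X f n e')) / ln (real n))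
      \<le> ereal (ln (real (cover_num X f n e)) / ln (real n))"
    by (simp add: divide_right_mono)
qed

lemma hpol_eq_SUP:
  assumes "compact X" "continuous_on X f" "f ` X \<subseteq> X"
  shows "hpol X f = (SUP e\<in>{0<..}. limsup (\<lambda>n. ereal (ln (real (cover_num X f n e)) / ln (real n))))"
  unfolding hpol_def
  using limsup_log_cover_num_antimono[OF assms]
  by (intro tendsto_Lim tendsto_at_right_0_SUP_antimono) auto

lemma one_le_limsup_log_cover_num:
  assumes "\<And>n. n \<ge> 1 \<Longrightarrow> n \<le> cover_num X f n e"
  shows "1 \<le> limsup (\<lambda>n. ereal (ln (real (cover_num X f n e)) / ln (real n)))"
proof (intro le_Limsup eventually_sequentiallyI[of 2])
  fix n :: nat assume "n \<ge> 2"
  then have "ln (real n) \<le> ln (real (cover_num X f n e))" "ln (real n) > 0"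
    using assms[of n] by (auto intro: ln_of_nat_mono)
  then show "1 \<le> ereal (ln (real (cover_num X f n e)) / ln (real n))"
    by simp
qed simp

theorem proposition2p1:
  fixes X :: "'a::metric_space set" and f :: "'a \<Rightarrow> 'a"
  assumes "compact X"
    and "\<exists>g. homeomorphism X X f g"
    and "\<exists>x. wandering_point X f x"
  shows "hpol X f \<ge> 1"
proof -
  obtain g where hom: "homeomorphism X X f g"
    using assms(2) by blast
  then have cont: "continuous_on X f" and fX: "f ` X \<subseteq> X"
    unfolding homeomorphism_def by auto
  obtain x where x: "wandering_point X f x"
    using assms(3) by blast
  then obtain r where r: "r > 0" "\<forall>k\<ge>1. (f ^^ k) x \<notin> ball x r"
    using wandering_point_escapes_ball fX by blast
  have "1 \<le> limsup (\<lambda>n. ereal (ln (real (cover_num X f n (r/2))) / ln (real n)))"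
    using n_le_cover_num_escaping_point[OF assms(1) hom _ r(2)] x r(1)
    by (intro one_le_limsup_log_cover_num) (auto simp: wandering_point_def)
  also have "\<dots> \<le> hpol X f"
    unfolding hpol_eq_SUP[OF assms(1) cont fX] using r(1) by (intro SUP_upper) auto
  finally show ?thesis .
qed

end
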